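(* Under the assumptions below, for every $\epsilon\in(0,1)$, $v^\epsilon\ge g^\epsilon$ on $E_T$, where $v^\epsilon$ is the bounded classical solution in $H^{2+\frac{\beta-\alpha}{2},1+\frac{\beta-\alpha}{4}}(E_T)$ ($\beta\in(\alpha,2)$) of $$(\partial_t-\mathcal{L}_D-I+r)v^\epsilon+p_\epsilon(v^\epsilon-g^\epsilon)=0\ \text{ on }\mathbb{R}\times(0,T],\qquad v^\epsilon(x,0)=g^\epsilon(x).$$ Assumptions: $T>0$, $E_T=\mathbb{R}\times[0,T]$; $a,b,r\in H^{\ell,\ell/2}(E_T)$ for some $\ell>1$, $r\ge0$, $a\ge\lambda>0$ on $E_T$; $\nu$ is a Lévy measure with $\int_{|y|>1}|y|\,\nu(dy)<\infty$ and a density $\rho$ with $\rho(y)\le M/|y|^{1+\alpha}$ for $|y|\le1$, $M>0$, $1\le\alpha<2$; $g$ satisfies $0\le g\le K$, is $L$-Lipschitz, and $\partial^2_{xx}g\ge-J_0$ distributionally.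
   Context: $\mathcal{L}_Dv=a\,\partial^2_{xx}v+b\,\partial_xv$, $Iv(x,t)=\int_{\mathbb{R}}[v(x+y,t)-v(x,t)-y\,\partial_xv(x,t)\mathbf{1}_{\{|y|\le1\}}]\nu(dy)$. $(g^\epsilon)$ are smooth mollifications of $g$ with $\partial^2_{xx}g^\epsilon\ge-J_0$, $0\le g^\epsilon\le K$, $|(g^\epsilon)'|\le L$. Each $p_\epsilon\in C^\infty(\mathbb{R})$ satisfies: $p_\epsilon\le0$; $p_\epsilon(y)=0$ for $y\ge\epsilon$; $p_\epsilon(0)=-a^{(0)}J_0-|b|^{(0)}L-r^{(0)}K-J_0\int_{|y|\le1}|y|^2\nu(dy)-K\int_{|y|>1}\nu(dy)$ with $a^{(0)}=\max_{E_T}a$, $|b|^{(0)}=\max_{E_T}|b|$, $r^{(0)}=\max_{E_T}r$; $p_\epsilon'\ge0$; $p_\epsilon''\le0$; $p_\epsilon(y)\to0$ for $y>0$ and $\to-\infty$ for $y<0$ as $\epsilon\downarrow0$. $H^{\gamma,\gamma/2}(E_T)$ denotes the parabolic Hölder space of order $\gamma$ (non-integer) on $E_T$. *)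

theory Defs
  imports "HOL-Analysis.Analysis"
begin

definition smooth_fun :: "(real \<Rightarrow> real) \<Rightarrow> bool" where
  "smooth_fun f \<longleftrightarrow> (\<forall>k x. ((deriv ^^ k) f) differentiable (at x))"

text \<open>Parabolic Hoelder space H^{l,l/2}(E_T), E_T = R x [0,T], l > 0 non-integer
  (Ladyzhenskaya-Solonnikov-Uraltseva): D i j stands for the derivative
  d_t^i d_x^j u, defined for 2i+j <= [l]; all are bounded and continuous on E_T,
  those with 2i+j = [l] are (l-[l])-Hoelder in x, and those with 0 < l-2i-j < 2
  are ((l-2i-j)/2)-Hoelder in t.\<close>
definition par_holder :: "real \<Rightarrow> real \<Rightarrow> (real \<Rightarrow> real \<Rightarrow> real) \<Rightarrow> bool" where
  "par_holder T l u \<longleftrightarrow> l > 0 \<and> l \<notin> \<int> \<and>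
    (\<exists>D :: nat \<Rightarrow> nat \<Rightarrow> real \<Rightarrow> real \<Rightarrow> real.
      (\<forall>x t. t \<in> {0..T} \<longrightarrow> D 0 0 x t = u x t) \<and>
      (\<forall>i j x t. 2*i + j + 1 \<le> nat \<lfloor>l\<rfloor> \<and> t \<in> {0..T} \<longrightarrow>
         ((\<lambda>y. D i j y t) has_real_derivative D i (Suc j) x t) (at x)) \<and>
      (\<forall>i j x t. 2*(i+1) + j \<le> nat \<lfloor>l\<rfloor> \<and> t \<in> {0..T} \<longrightarrow>
         ((\<lambda>s. D i j x s) has_real_derivative D (Suc i) j x t) (at t within {0..T})) \<and>
      (\<forall>i j. 2*i + j \<le> nat \<lfloor>l\<rfloor> \<longrightarrow>
         continuous_on (UNIV \<times> {0..T}) (\<lambda>(x,t). D i j x t) \<and>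
         (\<exists>C. \<forall>x t. t \<in> {0..T} \<longrightarrow> \<bar>D i j x t\<bar> \<le> C)) \<and>
      (\<forall>i j. 2*i + j = nat \<lfloor>l\<rfloor> \<longrightarrow>
         (\<exists>C. \<forall>x y t. t \<in> {0..T} \<longrightarrow>
            \<bar>D i j x t - D i j y t\<bar> \<le> C * \<bar>x - y\<bar> powr (l - of_int \<lfloor>l\<rfloor>))) \<and>
      (\<forall>i j. 2*i + j \<le> nat \<lfloor>l\<rfloor> \<and> l - real (2*i + j) < 2 \<longrightarrow>
         (\<exists>C. \<forall>x t s. t \<in> {0..T} \<and> s \<in> {0..T} \<longrightarrow>
            \<bar>D i j x t - D i j x s\<bar> \<le> C * \<bar>t - s\<bar> powr ((l - real (2*i + j)) / 2))))"

definition Dx :: "(real \<Rightarrow> real \<Rightarrow> real) \<Rightarrow> real \<Rightarrow> real \<Rightarrow> real" where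
  "Dx v x t = deriv (\<lambda>y. v y t) x"

definition Dxx :: "(real \<Rightarrow> real \<Rightarrow> real) \<Rightarrow> real \<Rightarrow> real \<Rightarrow> real" where
  "Dxx v x t = deriv (\<lambda>y. Dx v y t) x"

definition levy_measure :: "real measure \<Rightarrow> bool" where
  "levy_measure \<nu> \<longleftrightarrow> sets \<nu> = sets borel \<and> emeasure \<nu> {0} = 0 \<and>
     (\<integral>\<^sup>+ y. ennreal (min 1 (y\<^sup>2)) \<partial>\<nu>) < \<infinity>"

definition levy_op :: "real measure \<Rightarrow> (real \<Rightarrow> real \<Rightarrow> real) \<Rightarrow> real \<Rightarrow> real \<Rightarrow> real" where
  "levy_op \<nu> v x t = (\<integral> y. (v (x + y) t - v x t - y * Dx v x t * indicator {-1..1} y) \<partial>\<nu>)"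

definition mollifier :: "(real \<Rightarrow> real) \<Rightarrow> bool" where
  "mollifier \<phi> \<longleftrightarrow> smooth_fun \<phi> \<and> (\<forall>y. 0 \<le> \<phi> y) \<and> (\<forall>y. 1 \<le> \<bar>y\<bar> \<longrightarrow> \<phi> y = 0)
     \<and> (\<phi> has_integral 1) UNIV"

definition dist_second_deriv_ge :: "(real \<Rightarrow> real) \<Rightarrow> real \<Rightarrow> bool" where
  "dist_second_deriv_ge g c \<longleftrightarrow>
     (\<forall>\<psi>. smooth_fun \<psi> \<and> (\<forall>x. 0 \<le> \<psi> x) \<and> (\<exists>R. \<forall>x. R \<le> \<bar>x\<bar> \<longrightarrow> \<psi> x = 0) \<longrightarrow>
        integral UNIV (\<lambda>x. g x * deriv (deriv \<psi>) x) \<ge> c * integral UNIV \<psi>)"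

end

theory Submission
  imports Defs
begin

text \<open>
  Suppose v < G = g_eps somewhere. With the bracket <x> = sqrt (1 + x^2), the perturbed
  difference Z = v - G + \<delta> <x> + \<delta> C t is then negative somewhere for small \<delta> > 0 and tends
  to +\<infinity> as |x| \<rightarrow> \<infinity>, so it attains a negative minimum on R \<times> [0,T], at a time
  t1 > 0 because Z(x,0) = \<delta> <x> > 0. There Z_x = 0, Z_xx \<ge> 0, Z_t \<le> 0 and v < G.
  A second-order Taylor expansion, using G'' \<ge> -J0 and 0 \<le> G \<le> K, bounds the jump integrand
  of I from below, so each term of the generator is bounded below; since p_eps is nondecreasing,
  p_eps(v - G) \<le> p_eps(0), and p_eps(0) is chosen to cancel exactly these bounds up to an
  error \<delta> C0. Hence Z_t \<ge> \<delta> (C - C0) > 0 once C > C0, a contradiction.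
\<close>

lemma taylor_second_order:
  fixes f f1 f2 :: "real \<Rightarrow> real"
  assumes "\<And>t. (f has_real_derivative f1 t) (at t)"
    and "\<And>t. (f1 has_real_derivative f2 t) (at t)"
  obtains s where "f (x + y) = f x + f1 x * y + f2 s / 2 * y\<^sup>2"
proof (cases "y = 0")
  case True
  then show ?thesis by (intro that[of x]) simp
next
  case False
  define diff where "diff = (\<lambda>m::nat. if m = 0 then f else if m = 1 then f1 else f2)"
  obtain s where "f (x + y) =
      (\<Sum>m<2. diff m x / fact m * (x + y - x) ^ m) + diff 2 s / fact 2 * (x + y - x)\<^sup>2"
    using Taylor[where a = "min x (x + y)" and b = "max x (x + y)" and n = 2 and diff = diff
        and f = f and c = x and x = "x + y"] False assms
    by (fastforce simp: diff_def less_2_cases_iff)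
  then show ?thesis
    by (intro that[of s]) (simp add: diff_def numeral_2_eq_2 lessThan_Suc)
qed

lemma taylor_remainder_ge:
  fixes f f1 f2 :: "real \<Rightarrow> real"
  assumes "\<And>t. (f has_real_derivative f1 t) (at t)"
    and "\<And>t. (f1 has_real_derivative f2 t) (at t)"
    and "\<And>t. c \<le> f2 t"
  shows "c / 2 * y\<^sup>2 \<le> f (x + y) - f x - f1 x * y"
proof -
  obtain s where "f (x + y) = f x + f1 x * y + f2 s / 2 * y\<^sup>2"
    using taylor_second_order[OF assms(1,2)] .
  moreover have "c / 2 * y\<^sup>2 \<le> f2 s / 2 * y\<^sup>2"
    using assms(3)[of s] by (intro mult_right_mono) auto
  ultimately show ?thesis by simp
qed

lemma taylor_remainder_le:
  fixes f f1 f2 :: "real \<Rightarrow> real"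
  assumes "\<And>t. (f has_real_derivative f1 t) (at t)"
    and "\<And>t. (f1 has_real_derivative f2 t) (at t)"
    and "\<And>t. f2 t \<le> c"
  shows "f (x + y) - f x - f1 x * y \<le> c / 2 * y\<^sup>2"
proof -
  have "- c / 2 * y\<^sup>2 \<le> - f (x + y) - - f x - - f1 x * y"
    by (rule taylor_remainder_ge[of "\<lambda>x. - f x" "\<lambda>x. - f1 x" "\<lambda>x. - f2 x"])
      (use assms in \<open>auto intro: DERIV_minus\<close>)
  then show ?thesis by simp
qed

lemma DERIV_global_min:
  fixes f f1 :: "real \<Rightarrow> real"
  assumes f1: "\<And>t. (f has_real_derivative f1 t) (at t)"
    and f2: "(f1 has_real_derivative f2) (at x)"
    and min: "\<And>y. f x \<le> f y"
  shows "f1 x = 0" "0 \<le> f2"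
proof -
  show f1_x: "f1 x = 0"
    using DERIV_local_min[OF f1[of x], of 1] min by auto
  show "0 \<le> f2"
  proof (rule ccontr)
    assume "\<not> 0 \<le> f2"
    then obtain d where d: "d > 0" "\<forall>h>0. h < d \<longrightarrow> f1 x > f1 (x + h)"
      using DERIV_neg_dec_right[OF f2] by auto
    obtain z where z: "x < z" "z < x + d/2" "f (x + d/2) - f x = (x + d/2 - x) * f1 z"
      using MVT2[of x "x + d/2" f f1] f1 d by auto
    have "f1 z < 0"
      using d(2)[rule_format, of "z - x"] z f1_x d by auto
    then have "(x + d/2 - x) * f1 z < 0"
      using d by (simp add: mult_pos_neg)
    then have "f (x + d/2) < f x"
      using z(3) by linarith
    then show False
      using min[of "x + d/2"] by simp
  qed
qed

lemma DERIV_within_min_nonpos: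
  fixes f :: "real \<Rightarrow> real"
  assumes "(f has_real_derivative D) (at t within {0..T})" "0 < t" "t \<le> T"
    and "\<And>s. s \<in> {0..T} \<Longrightarrow> f t \<le> f s"
  shows "D \<le> 0"
proof (rule ccontr)
  assume "\<not> D \<le> 0"
  then obtain d where d: "d > 0" "\<forall>h>0. t - h \<in> {0..T} \<longrightarrow> h < d \<longrightarrow> f (t - h) < f t"
    using has_real_derivative_pos_inc_left[OF assms(1)] by auto
  define h where "h = min (d/2) t"
  have "f (t - h) < f t"
    using d assms(2,3) by (intro d(2)[rule_format]) (auto simp: h_def)
  moreover have "f t \<le> f (t - h)"
    using assms(2,3) d by (intro assms(4)) (auto simp: h_def)
  ultimately show False by simp
qed

lemma second_deriv_lower_bound_nonpos:
  fixes f1 f2 :: "real \<Rightarrow> real"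
  assumes "\<And>t. (f1 has_real_derivative f2 t) (at t)"
    and "\<And>t. \<bar>f1 t\<bar> \<le> L"
    and "\<And>t. c \<le> f2 t"
  shows "c \<le> 0"
proof (rule ccontr)
  assume "\<not> c \<le> 0"
  define X where "X = (2 * L + 1) / c"
  have "0 \<le> L" using assms(2)[of 0] by linarith
  with \<open>\<not> c \<le> 0\<close> have X: "X > 0" by (simp add: X_def)
  obtain z where "f1 X - f1 0 = X * f2 z"
    using MVT2[OF X, of f1 f2] assms(1) by auto
  moreover have "X * c \<le> X * f2 z"
    using assms(3)[of z] X by (intro mult_left_mono) auto
  moreover have "X * c = 2 * L + 1"
    using \<open>\<not> c \<le> 0\<close> by (simp add: X_def)
  ultimately show False
    using assms(2)[of X] assms(2)[of 0] by linarith
qed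

lemma smooth_fun_has_real_derivative:
  "smooth_fun f \<Longrightarrow> (f has_real_derivative deriv f x) (at x)"
  using DERIV_deriv_iff_real_differentiable unfolding smooth_fun_def
  by (metis funpow_0)

lemma smooth_fun_deriv: "smooth_fun f \<Longrightarrow> smooth_fun (deriv f)"
  unfolding smooth_fun_def by (metis comp_apply funpow_Suc_right)

lemma smooth_fun_mono:
  assumes "smooth_fun f" "\<And>x. 0 \<le> deriv f x"
  shows "mono f"
  using DERIV_nonneg_imp_nondecreasing smooth_fun_has_real_derivative assms
  by (metis monoI)

definition bracket :: "real \<Rightarrow> real" where
  "bracket x = sqrt (1 + x\<^sup>2)"

lemma bracket_ge_1: "1 \<le> bracket x"
  by (simp add: bracket_def)

lemma bracket_ge_abs: "\<bar>x\<bar> \<le> bracket x"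
  unfolding bracket_def by (rule real_le_rsqrt) simp

lemma continuous_on_bracket: "continuous_on S bracket"
  unfolding bracket_def by (intro continuous_intros)

lemma bracket_has_derivative: "(bracket has_real_derivative x / bracket x) (at x)"
proof -
  have "0 < 1 + x\<^sup>2" by (simp add: add_pos_nonneg)
  then have "((\<lambda>x. sqrt (1 + x\<^sup>2)) has_real_derivative inverse (sqrt (1 + x\<^sup>2)) / 2 * (2 * x)) (at x)"
    by (intro DERIV_chain2[OF DERIV_real_sqrt]) (auto intro!: derivative_eq_intros)
  then show ?thesis
    unfolding bracket_def by (rule DERIV_cong) (simp add: field_simps)
qed

lemma bracket_slope_has_derivative:
  "((\<lambda>x. x / bracket x) has_real_derivative 1 / bracket x ^ 3) (at x)"
proof -
  have pos: "0 < bracket x" using bracket_ge_1[of x] by linarith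
  have sq: "bracket x * bracket x = 1 + x\<^sup>2"
    unfolding bracket_def by (simp add: add_nonneg_nonneg)
  have "((\<lambda>x. x / bracket x) has_real_derivative
      (1 * bracket x - x * (x / bracket x)) / (bracket x * bracket x)) (at x)"
    by (rule DERIV_divide[OF DERIV_ident bracket_has_derivative]) (use pos in simp)
  then show ?thesis
    by (rule DERIV_cong) (use pos sq in \<open>simp add: field_simps power3_eq_cube power2_eq_square\<close>)
qed

lemma abs_bracket_slope_le_1: "\<bar>x / bracket x\<bar> \<le> 1"
  using bracket_ge_abs[of x] bracket_ge_1[of x] by (simp add: abs_divide divide_le_eq_1)

lemma bracket_curvature_le_1: "1 / bracket x ^ 3 \<le> 1"
  using bracket_ge_1[of x] by (simp add: one_le_power)

lemma par_holder_bounded: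
  assumes "par_holder T l u"
  shows "\<exists>C. \<forall>x t. t \<in> {0..T} \<longrightarrow> \<bar>u x t\<bar> \<le> C"
proof -
  from assms obtain D :: "nat \<Rightarrow> nat \<Rightarrow> real \<Rightarrow> real \<Rightarrow> real" where
    D0: "\<forall>x t. t \<in> {0..T} \<longrightarrow> D 0 0 x t = u x t" and
    bdd: "\<exists>C. \<forall>x t. t \<in> {0..T} \<longrightarrow> \<bar>D 0 0 x t\<bar> \<le> C"
    unfolding par_holder_def by (elim conjE exE) (metis le0 mult_0_right add_0)
  then show ?thesis by metis
qed

lemma par_holder_continuous:
  assumes "par_holder T l u"
  shows "continuous_on (UNIV \<times> {0..T}) (\<lambda>(x, t). u x t)"
proof -
  from assms obtain D :: "nat \<Rightarrow> nat \<Rightarrow> real \<Rightarrow> real \<Rightarrow> real" where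
    D0: "\<forall>x t. t \<in> {0..T} \<longrightarrow> D 0 0 x t = u x t" and
    cont: "continuous_on (UNIV \<times> {0..T}) (\<lambda>(x, t). D 0 0 x t)"
    unfolding par_holder_def by (elim conjE exE) (metis le0 mult_0_right add_0)
  show ?thesis
    by (rule continuous_on_cong[THEN iffD1, OF refl _ cont]) (use D0 in auto)
qed

lemma par_holder_Dx_Dxx:
  assumes "par_holder T l u" "2 \<le> nat \<lfloor>l\<rfloor>" "t \<in> {0..T}"
  shows "((\<lambda>y. u y t) has_real_derivative Dx u x t) (at x)"
    and "((\<lambda>y. Dx u y t) has_real_derivative Dxx u x t) (at x)"
proof -
  from assms(1) obtain D :: "nat \<Rightarrow> nat \<Rightarrow> real \<Rightarrow> real \<Rightarrow> real" where
    D0: "\<forall>x t. t \<in> {0..T} \<longrightarrow> D 0 0 x t = u x t" and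
    Dx: "\<forall>i j x t. 2*i + j + 1 \<le> nat \<lfloor>l\<rfloor> \<and> t \<in> {0..T} \<longrightarrow>
         ((\<lambda>y. D i j y t) has_real_derivative D i (Suc j) x t) (at x)"
    unfolding par_holder_def by (elim conjE exE) blast
  have u_x: "((\<lambda>y. u y t) has_real_derivative D 0 1 x t) (at x)" for x
    using Dx[rule_format, of 0 0 t x] D0 assms(2,3) by simp
  then have Dx_u: "Dx u x t = D 0 1 x t" for x
    unfolding Dx_def by (rule DERIV_imp_deriv)
  have ux_x: "((\<lambda>y. Dx u y t) has_real_derivative D 0 2 x t) (at x)"
    using Dx[rule_format, of 0 1 t x] assms(2,3) by (simp add: Dx_u numeral_2_eq_2)
  show "((\<lambda>y. u y t) has_real_derivative Dx u x t) (at x)"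
    using u_x by (simp add: Dx_u)
  show "((\<lambda>y. Dx u y t) has_real_derivative Dxx u x t) (at x)"
    using ux_x unfolding Dxx_def by (simp add: DERIV_imp_deriv)
qed

lemma le_Sup_strip:
  fixes u :: "real \<Rightarrow> real \<Rightarrow> real"
  assumes "\<exists>C. \<forall>x t. t \<in> {0..T} \<longrightarrow> \<bar>u x t\<bar> \<le> C" "t \<in> {0..T}"
  shows "u x t \<le> Sup ((\<lambda>(x, t). u x t) ` (UNIV \<times> {0..T}))"
proof (rule cSup_upper)
  show "u x t \<in> (\<lambda>(x, t). u x t) ` (UNIV \<times> {0..T})"
    using assms(2) by (intro image_eqI[of _ _ "(x, t)"]) auto
  obtain C where "\<forall>x t. t \<in> {0..T} \<longrightarrow> \<bar>u x t\<bar> \<le> C" using assms(1) by blast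
  then show "bdd_above ((\<lambda>(x, t). u x t) ` (UNIV \<times> {0..T}))"
    by (intro bdd_aboveI[of _ C]) (force dest: abs_le_D1)
qed

definition small_jump_moment :: "real measure \<Rightarrow> real" where
  "small_jump_moment \<nu> = (\<integral> y. y\<^sup>2 * indicator {-1..1} y \<partial>\<nu>)"

definition large_jump_mass :: "real measure \<Rightarrow> real" where
  "large_jump_mass \<nu> = measure \<nu> {y. 1 < \<bar>y\<bar>}"

definition large_jump_moment :: "real measure \<Rightarrow> real" where
  "large_jump_moment \<nu> = (\<integral> y. \<bar>y\<bar> * indicator {y. 1 < \<bar>y\<bar>} y \<partial>\<nu>)"

lemma levy_measure_integrable:
  fixes f :: "real \<Rightarrow> real"
  assumes "levy_measure \<nu>" "f \<in> borel_measurable borel" "\<And>y. \<bar>f y\<bar> \<le> min 1 (y\<^sup>2)"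
  shows "integrable \<nu> f"
proof (rule integrableI_bounded)
  have sets: "sets \<nu> = sets borel" using assms(1) by (simp add: levy_measure_def)
  show "f \<in> borel_measurable \<nu>"
    using assms(2) by (simp add: measurable_cong_sets[OF sets refl])
  have "(\<integral>\<^sup>+ y. ennreal (norm (f y)) \<partial>\<nu>) \<le> (\<integral>\<^sup>+ y. ennreal (min 1 (y\<^sup>2)) \<partial>\<nu>)"
    using assms(3) by (intro nn_integral_mono) (simp add: ennreal_leI)
  also have "\<dots> < \<infinity>" using assms(1) by (simp add: levy_measure_def)
  finally show "(\<integral>\<^sup>+ y. ennreal (norm (f y)) \<partial>\<nu>) < \<infinity>" .
qed

lemma open_large_jumps: "open {y :: real. 1 < \<bar>y\<bar>}"
  by (simp add: open_Collect_less continuous_intros)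

lemma integrable_small_jump_moment:
  "levy_measure \<nu> \<Longrightarrow> integrable \<nu> (\<lambda>y. y\<^sup>2 * indicator {-1..1} y)"
  by (rule levy_measure_integrable) (auto simp: indicator_def abs_square_le_1)

lemma integrable_large_jump_mass:
  "levy_measure \<nu> \<Longrightarrow> integrable \<nu> (indicator {y. 1 < \<bar>y\<bar>} :: real \<Rightarrow> real)"
  by (rule levy_measure_integrable)
    (auto simp: indicator_def borel_open[OF open_large_jumps]
          intro: abs_le_square_iff[of 1, THEN iffD1, simplified])

lemma integrable_large_jump_moment:
  assumes "levy_measure \<nu>" "(\<integral>\<^sup>+ y. ennreal (\<bar>y\<bar> * indicator {y. 1 < \<bar>y\<bar>} y) \<partial>\<nu>) < \<infinity>"
  shows "integrable \<nu> (\<lambda>y. \<bar>y\<bar> * indicator {y. 1 < \<bar>y\<bar>} y)"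
proof (rule integrableI_bounded)
  have sets: "sets \<nu> = sets borel" using assms(1) by (simp add: levy_measure_def)
  show "(\<lambda>y. \<bar>y\<bar> * indicator {y. 1 < \<bar>y\<bar>} y) \<in> borel_measurable \<nu>"
    unfolding measurable_cong_sets[OF sets refl]
    by (intro borel_measurable_times borel_measurable_indicator borel_open[OF open_large_jumps]
        borel_measurable_abs measurable_ident_sets refl)
  show "(\<integral>\<^sup>+ y. ennreal (norm (\<bar>y\<bar> * indicator {y. 1 < \<bar>y\<bar>} y :: real)) \<partial>\<nu>) < \<infinity>"
    using assms(2) by (simp add: abs_mult)
qed

lemma large_jump_mass_eq_integral:
  "levy_measure \<nu> \<Longrightarrow> large_jump_mass \<nu> = (\<integral> y. indicator {y. 1 < \<bar>y\<bar>} y \<partial>\<nu>)"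
  using sets_eq_imp_space_eq[of \<nu> borel]
  by (simp add: large_jump_mass_def levy_measure_def)

lemma jump_moments_nonneg:
  "0 \<le> small_jump_moment \<nu>" "0 \<le> large_jump_mass \<nu>" "0 \<le> large_jump_moment \<nu>"
  unfolding small_jump_moment_def large_jump_mass_def large_jump_moment_def
  by (auto intro!: integral_nonneg_AE)

lemma levy_integrand_lower_bound_at_min:
  fixes f G G1 G2 :: "real \<Rightarrow> real"
  assumes min: "\<And>y. f x - G x + \<delta> * bracket x \<le> f y - G y + \<delta> * bracket y"
    and G: "\<And>t. (G has_real_derivative G1 t) (at t)" "\<And>t. (G1 has_real_derivative G2 t) (at t)"
    and G2: "\<And>t. - J \<le> G2 t" and G_bd: "\<And>t. 0 \<le> G t \<and> G t \<le> K"
    and J: "0 \<le> J" and \<delta>: "0 \<le> \<delta>"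
  shows "- (J + \<delta>) * (y\<^sup>2 * indicator {-1..1} y) - K * indicator {y. 1 < \<bar>y\<bar>} y
           - \<delta> * (\<bar>y\<bar> * indicator {y. 1 < \<bar>y\<bar>} y)
         \<le> f (x + y) - f x - y * (G1 x - \<delta> * (x / bracket x)) * indicator {-1..1} y"
proof -
  have f_incr: "f (x + y) - f x = (G (x + y) - G x) - \<delta> * (bracket (x + y) - bracket x)
      + ((f (x + y) - G (x + y) + \<delta> * bracket (x + y)) - (f x - G x + \<delta> * bracket x))"
    by (simp add: algebra_simps)
  moreover have "0 \<le> (f (x + y) - G (x + y) + \<delta> * bracket (x + y)) - (f x - G x + \<delta> * bracket x)"
    using min[of "x + y"] by simp
  ultimately have f_incr_ge: "(G (x + y) - G x) - \<delta> * (bracket (x + y) - bracket x) \<le> f (x + y) - f x"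
    by linarith
  show ?thesis
  proof (cases "\<bar>y\<bar> \<le> 1")
    case True
    define s where "s = x / bracket x"
    have "- J / 2 * y\<^sup>2 \<le> G (x + y) - G x - G1 x * y"
      using taylor_remainder_ge[OF G G2] .
    moreover have "bracket (x + y) - bracket x - s * y \<le> 1 / 2 * y\<^sup>2"
      unfolding s_def using taylor_remainder_le[OF bracket_has_derivative
          bracket_slope_has_derivative bracket_curvature_le_1] .
    then have "\<delta> * (bracket (x + y) - bracket x) - \<delta> * (s * y) \<le> \<delta> / 2 * y\<^sup>2"
      using \<delta> mult_left_mono by (fastforce simp: algebra_simps)
    moreover have "0 \<le> J * y\<^sup>2" "0 \<le> \<delta> * y\<^sup>2" using J \<delta> by auto
    moreover have "y * (G1 x - \<delta> * s) = G1 x * y - \<delta> * (s * y)"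
      by (simp add: algebra_simps)
    moreover have "indicator {-1..1} y = (1::real)" "indicator {y. 1 < \<bar>y\<bar>} y = (0::real)"
      using True by (auto simp: indicator_def abs_le_iff)
    ultimately show ?thesis
      using f_incr_ge by (simp add: s_def[symmetric] algebra_simps)
  next
    case False
    have "norm (bracket (x + y) - bracket x) \<le> 1 * norm ((x + y) - x)"
      by (rule field_differentiable_bound[OF convex_UNIV])
        (use bracket_has_derivative abs_bracket_slope_le_1 in auto)
    then have "\<delta> * (bracket (x + y) - bracket x) \<le> \<delta> * \<bar>y\<bar>"
      using \<delta> by (intro mult_left_mono) auto
    moreover have "indicator {-1..1} y = (0::real)" "indicator {y. 1 < \<bar>y\<bar>} y = (1::real)"
      using False by (auto simp: indicator_def abs_le_iff)
    ultimately show ?thesis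
      using f_incr_ge G_bd[of x] G_bd[of "x + y"] by simp
  qed
qed

lemma levy_op_lower_bound_at_min:
  fixes v :: "real \<Rightarrow> real \<Rightarrow> real" and G G1 G2 :: "real \<Rightarrow> real"
  assumes levy: "levy_measure \<nu>"
    and tail: "(\<integral>\<^sup>+ y. ennreal (\<bar>y\<bar> * indicator {y. 1 < \<bar>y\<bar>} y) \<partial>\<nu>) < \<infinity>"
    and min: "\<And>y. v x t - G x + \<delta> * bracket x \<le> v y t - G y + \<delta> * bracket y"
    and Dx: "Dx v x t = G1 x - \<delta> * (x / bracket x)"
    and G: "\<And>t. (G has_real_derivative G1 t) (at t)" "\<And>t. (G1 has_real_derivative G2 t) (at t)"
    and G2: "\<And>t. - J \<le> G2 t" and G_bd: "\<And>t. 0 \<le> G t \<and> G t \<le> K"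
    and J: "0 \<le> J" and \<delta>: "0 \<le> \<delta>"
  shows "- (J + \<delta>) * small_jump_moment \<nu> - K * large_jump_mass \<nu> - \<delta> * large_jump_moment \<nu>
    \<le> levy_op \<nu> v x t"
proof -
  define h where "h y = - (J + \<delta>) * (y\<^sup>2 * indicator {-1..1} y) - K * indicator {y. 1 < \<bar>y\<bar>} y
    - \<delta> * (\<bar>y\<bar> * indicator {y. 1 < \<bar>y\<bar>} y)" for y :: real
  define F where "F y = v (x + y) t - v x t - y * Dx v x t * indicator {-1..1} y" for y
  have h_int: "integrable \<nu> h"
    unfolding h_def using integrable_small_jump_moment[OF levy] integrable_large_jump_mass[OF levy]
      integrable_large_jump_moment[OF levy tail] by simp
  have h_integral: "(\<integral> y. h y \<partial>\<nu>)
      = - (J + \<delta>) * small_jump_moment \<nu> - K * large_jump_mass \<nu> - \<delta> * large_jump_moment \<nu>"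
    unfolding h_def small_jump_moment_def large_jump_moment_def large_jump_mass_eq_integral[OF levy]
    using integrable_small_jump_moment[OF levy] integrable_large_jump_mass[OF levy]
      integrable_large_jump_moment[OF levy tail] by simp
  have "h y \<le> F y" for y
    unfolding h_def F_def Dx
    by (rule levy_integrand_lower_bound_at_min[of "\<lambda>y. v y t", OF min G G2 G_bd J \<delta>])
  then have "integrable \<nu> F \<Longrightarrow> (\<integral> y. h y \<partial>\<nu>) \<le> (\<integral> y. F y \<partial>\<nu>)"
    using h_int by (intro integral_mono)
  moreover have "(\<integral> y. h y \<partial>\<nu>) \<le> 0"
  proof -
    have "0 \<le> K" using G_bd[of 0] by linarith
    then have "0 \<le> (J + \<delta>) * small_jump_moment \<nu>" "0 \<le> K * large_jump_mass \<nu>"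
      "0 \<le> \<delta> * large_jump_moment \<nu>"
      using jump_moments_nonneg[of \<nu>] J \<delta> by auto
    then show ?thesis unfolding h_integral by linarith
  qed
  \<comment> \<open>A non-integrable integrand makes \<open>levy_op\<close> 0, which the nonpositive bound still satisfies.\<close>
  ultimately show ?thesis
    unfolding levy_op_def F_def[symmetric] h_integral[symmetric]
    by (cases "integrable \<nu> F") (auto simp: not_integrable_integral_eq)
qed

lemma generator_lower_bound_at_min:
  fixes v :: "real \<Rightarrow> real \<Rightarrow> real" and G G1 G2 :: "real \<Rightarrow> real"
  assumes levy: "levy_measure \<nu>"
    and tail: "(\<integral>\<^sup>+ y. ennreal (\<bar>y\<bar> * indicator {y. 1 < \<bar>y\<bar>} y) \<partial>\<nu>) < \<infinity>"
    and v_x: "\<And>y. ((\<lambda>y. v y t) has_real_derivative Dx v y t) (at y)"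
    and v_xx: "((\<lambda>y. Dx v y t) has_real_derivative Dxx v x t) (at x)"
    and min: "\<And>y. v x t - G x + \<delta> * bracket x \<le> v y t - G y + \<delta> * bracket y"
    and G: "\<And>t. (G has_real_derivative G1 t) (at t)" "\<And>t. (G1 has_real_derivative G2 t) (at t)"
    and G2: "\<And>t. - J \<le> G2 t" and G1_bd: "\<And>t. \<bar>G1 t\<bar> \<le> L"
    and G_bd: "\<And>t. 0 \<le> G t \<and> G t \<le> K"
    and J: "0 \<le> J" and \<delta>: "0 \<le> \<delta>"
    and a: "0 \<le> a" "a \<le> A" and b: "\<bar>b\<bar> \<le> B" and r: "0 \<le> r" "r \<le> R"
    and below: "v x t \<le> G x"
  shows "- (A * J + B * L + R * K + J * small_jump_moment \<nu> + K * large_jump_mass \<nu>)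
           - \<delta> * (A + B + small_jump_moment \<nu> + large_jump_moment \<nu>)
         \<le> a * Dxx v x t + b * Dx v x t + levy_op \<nu> v x t - r * v x t"
proof -
  define Z' where "Z' y = Dx v y t - G1 y + \<delta> * (y / bracket y)" for y
  have dZ: "((\<lambda>y. v y t - G y + \<delta> * bracket y) has_real_derivative Z' y) (at y)" for y
    unfolding Z'_def by (intro DERIV_add DERIV_diff DERIV_cmult v_x G bracket_has_derivative)
  have dZ': "(Z' has_real_derivative Dxx v x t - G2 x + \<delta> * (1 / bracket x ^ 3)) (at x)"
    unfolding Z'_def by (intro DERIV_add DERIV_diff DERIV_cmult v_xx G bracket_slope_has_derivative)
  from DERIV_global_min[OF dZ dZ' min] have Dx: "Dx v x t = G1 x - \<delta> * (x / bracket x)"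
    and Dxx_ge: "- J - \<delta> \<le> Dxx v x t"
    using G2[of x] mult_left_mono[OF bracket_curvature_le_1 \<delta>, of x] unfolding Z'_def by linarith+
  have "\<bar>\<delta> * (x / bracket x)\<bar> \<le> \<delta>"
    using mult_left_mono[OF abs_bracket_slope_le_1 \<delta>, of x] \<delta> by (simp add: abs_mult)
  then have "\<bar>Dx v x t\<bar> \<le> L + \<delta>"
    unfolding Dx using G1_bd[of x] abs_triangle_ineq4[of "G1 x" "\<delta> * (x / bracket x)"] by linarith
  have "- (A * (J + \<delta>)) \<le> a * Dxx v x t"
    using mult_left_mono[OF Dxx_ge a(1)] mult_right_mono[OF a(2), of "J + \<delta>"] J \<delta>
    by (simp add: algebra_simps)
  moreover have "- (B * (L + \<delta>)) \<le> b * Dx v x t"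
  proof -
    have "\<bar>b * Dx v x t\<bar> \<le> B * (L + \<delta>)"
      unfolding abs_mult using b \<open>\<bar>Dx v x t\<bar> \<le> L + \<delta>\<close> by (intro mult_mono) auto
    then show ?thesis by linarith
  qed
  moreover have "r * v x t \<le> R * K"
  proof -
    have "0 \<le> G x" "G x \<le> K" using G_bd[of x] by auto
    then show ?thesis
      using mult_left_mono[OF below r(1)] mult_left_mono[of "G x" K r] r(1)
        mult_right_mono[OF r(2), of K] by linarith
  qed
  moreover have "- (J + \<delta>) * small_jump_moment \<nu> - K * large_jump_mass \<nu>
      - \<delta> * large_jump_moment \<nu> \<le> levy_op \<nu> v x t"
    using levy_op_lower_bound_at_min[OF levy tail min Dx G G2 G_bd J \<delta>] .
  ultimately show ?thesis by (simp add: algebra_simps)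
qed

lemma strip_attains_min:
  fixes Z :: "real \<Rightarrow> real \<Rightarrow> real"
  assumes cont: "continuous_on (UNIV \<times> {0..T}) (\<lambda>(x, t). Z x t)"
    and t0: "t0 \<in> {0..T}"
    and far: "\<And>x t. t \<in> {0..T} \<Longrightarrow> R < \<bar>x\<bar> \<Longrightarrow> Z x0 t0 < Z x t"
  obtains x1 t1 where "t1 \<in> {0..T}" "\<And>x t. t \<in> {0..T} \<Longrightarrow> Z x1 t1 \<le> Z x t"
proof -
  define S where "S = {-R..R} \<times> {0..T}"
  have "(x0, t0) \<in> S"
    using far[OF t0, of x0] t0 by (force simp: S_def abs_le_iff)
  moreover have "continuous_on S (\<lambda>(x, t). Z x t)"
    by (rule continuous_on_subset[OF cont]) (auto simp: S_def)
  ultimately obtain p where p: "p \<in> S" "\<And>q. q \<in> S \<Longrightarrow> case_prod Z p \<le> case_prod Z q"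
    using continuous_attains_inf[of S "\<lambda>(x, t). Z x t"] by (auto simp: S_def compact_Times)
  show ?thesis
  proof (rule that[of "snd p" "fst p"])
    show "snd p \<in> {0..T}" using p(1) by (auto simp: S_def)
    fix x t assume "t \<in> {0..T}"
    show "Z (fst p) (snd p) \<le> Z x t"
    proof (cases "\<bar>x\<bar> \<le> R")
      case True
      then show ?thesis
        using p(2)[of "(x, t)"] \<open>t \<in> {0..T}\<close> by (auto simp: S_def abs_le_iff split: prod.splits)
    next
      case False
      then show ?thesis
        using far[OF \<open>t \<in> {0..T}\<close>, of x] p(2)[of "(x0, t0)"] \<open>(x0, t0) \<in> S\<close>
        by (auto split: prod.splits)
    qed
  qed
qed

lemma perturbed_difference_attains_min:
  fixes v :: "real \<Rightarrow> real \<Rightarrow> real" and G :: "real \<Rightarrow> real" and \<delta> C :: real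
  defines "Z \<equiv> \<lambda>x t. v x t - G x + \<delta> * bracket x + \<delta> * C * t"
  assumes v_cont: "continuous_on (UNIV \<times> {0..T}) (\<lambda>(x, t). v x t)"
    and v_bdd: "\<exists>M. \<forall>x t. t \<in> {0..T} \<longrightarrow> \<bar>v x t\<bar> \<le> M"
    and G_cont: "continuous_on UNIV G" and G_bd: "\<And>x. \<bar>G x\<bar> \<le> K"
    and "0 < \<delta>" "0 \<le> C" "t0 \<in> {0..T}"
  obtains x1 t1 where "t1 \<in> {0..T}" "\<And>x t. t \<in> {0..T} \<Longrightarrow> Z x1 t1 \<le> Z x t"
proof -
  obtain M where M: "\<And>x t. t \<in> {0..T} \<Longrightarrow> \<bar>v x t\<bar> \<le> M" using v_bdd by blast
  show thesis
  proof (rule strip_attains_min)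
    show "continuous_on (UNIV \<times> {0..T}) (\<lambda>(x, t). Z x t)"
      unfolding Z_def using v_cont
      by (auto intro!: continuous_intros continuous_on_compose2[OF G_cont]
            continuous_on_compose2[OF continuous_on_bracket] simp: split_beta')
    fix x t assume t: "t \<in> {0..T}" and "(Z x0 t0 + M + K) / \<delta> < \<bar>x\<bar>"
    then have "Z x0 t0 + M + K < \<delta> * \<bar>x\<bar>"
      using \<open>0 < \<delta>\<close> by (simp add: divide_less_eq mult.commute)
    also have "\<dots> \<le> \<delta> * bracket x"
      using bracket_ge_abs[of x] \<open>0 < \<delta>\<close> by simp
    finally have "Z x0 t0 + M + K < \<delta> * bracket x" .
    moreover have "0 \<le> \<delta> * C * t" using \<open>0 < \<delta>\<close> \<open>0 \<le> C\<close> t by simp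
    ultimately show "Z x0 t0 < Z x t"
      unfolding Z_def using M[OF t, of x] G_bd[of x] by (simp add: abs_le_iff)
  qed (use \<open>t0 \<in> {0..T}\<close> that in auto)
qed

locale penalized_obstacle_problem =
  fixes \<nu> :: "real measure" and T :: real and v a b r :: "real \<Rightarrow> real \<Rightarrow> real"
    and G G1 G2 P :: "real \<Rightarrow> real" and J L K A B R :: real
  assumes levy: "levy_measure \<nu>"
    and tail: "(\<integral>\<^sup>+ y. ennreal (\<bar>y\<bar> * indicator {y. 1 < \<bar>y\<bar>} y) \<partial>\<nu>) < \<infinity>"
    and v_cont: "continuous_on (UNIV \<times> {0..T}) (\<lambda>(x, t). v x t)"
    and v_bdd: "\<exists>M. \<forall>x t. t \<in> {0..T} \<longrightarrow> \<bar>v x t\<bar> \<le> M"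
    and v_x: "\<And>x t. t \<in> {0..T} \<Longrightarrow> ((\<lambda>y. v y t) has_real_derivative Dx v x t) (at x)"
    and v_xx: "\<And>x t. t \<in> {0..T} \<Longrightarrow> ((\<lambda>y. Dx v y t) has_real_derivative Dxx v x t) (at x)"
    and G: "\<And>x. (G has_real_derivative G1 x) (at x)" "\<And>x. (G1 has_real_derivative G2 x) (at x)"
    and G2: "\<And>x. - J \<le> G2 x" and G1_bd: "\<And>x. \<bar>G1 x\<bar> \<le> L"
    and G_bd: "\<And>x. 0 \<le> G x \<and> G x \<le> K"
    and a: "\<And>x t. t \<in> {0..T} \<Longrightarrow> 0 \<le> a x t \<and> a x t \<le> A"
    and b: "\<And>x t. t \<in> {0..T} \<Longrightarrow> \<bar>b x t\<bar> \<le> B"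
    and r: "\<And>x t. t \<in> {0..T} \<Longrightarrow> 0 \<le> r x t \<and> r x t \<le> R"
    and P: "mono P"
    and P0: "P 0 = - (A * J + B * L + R * K + J * small_jump_moment \<nu> + K * large_jump_mass \<nu>)"
    and v_eq: "\<And>x t. t \<in> {0<..T} \<Longrightarrow> ((\<lambda>s. v x s) has_real_derivative
        a x t * Dxx v x t + b x t * Dx v x t + levy_op \<nu> v x t - r x t * v x t - P (v x t - G x))
        (at t within {0..T})"
    and v_init: "\<And>x. v x 0 = G x"
begin

lemma J_nonneg: "0 \<le> J"
  using second_deriv_lower_bound_nonpos[OF G(2) G1_bd, of "- J"] G2 by simp

lemma perturbed_min_nonneg:
  fixes \<delta> C x1 t1 :: real
  defines "Z \<equiv> \<lambda>x t. v x t - G x + \<delta> * bracket x + \<delta> * C * t"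
  assumes \<delta>: "0 < \<delta>" and C: "0 \<le> C" "A + B + small_jump_moment \<nu> + large_jump_moment \<nu> < C"
    and t1: "t1 \<in> {0..T}" and min: "\<And>x t. t \<in> {0..T} \<Longrightarrow> Z x1 t1 \<le> Z x t"
  shows "0 \<le> Z x1 t1"
proof (rule ccontr)
  assume Z1_neg: "\<not> 0 \<le> Z x1 t1"
  have "t1 \<noteq> 0"
  proof
    assume "t1 = 0"
    then have "Z x1 t1 = \<delta> * bracket x1" by (simp add: Z_def v_init)
    with Z1_neg \<delta> bracket_ge_1[of x1] show False by (simp add: zero_le_mult_iff)
  qed
  with t1 have t1_pos: "t1 \<in> {0<..T}" by auto
  have below: "v x1 t1 \<le> G x1"
  proof -
    have "0 \<le> \<delta> * bracket x1" "0 \<le> \<delta> * C * t1"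
      using \<delta> C t1 bracket_ge_1[of x1] by auto
    then show ?thesis using Z1_neg unfolding Z_def by linarith
  qed
  define Lv where "Lv = a x1 t1 * Dxx v x1 t1 + b x1 t1 * Dx v x1 t1 + levy_op \<nu> v x1 t1
    - r x1 t1 * v x1 t1 - P (v x1 t1 - G x1)"
  have "- \<delta> * (A + B + small_jump_moment \<nu> + large_jump_moment \<nu>)
      - (A * J + B * L + R * K + J * small_jump_moment \<nu> + K * large_jump_mass \<nu>)
      \<le> a x1 t1 * Dxx v x1 t1 + b x1 t1 * Dx v x1 t1 + levy_op \<nu> v x1 t1 - r x1 t1 * v x1 t1"
  proof -
    have min1: "v x1 t1 - G x1 + \<delta> * bracket x1 \<le> v y t1 - G y + \<delta> * bracket y" for y
      using min[OF t1, of y] by (simp add: Z_def)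
    have a1: "0 \<le> a x1 t1" "a x1 t1 \<le> A" and r1: "0 \<le> r x1 t1" "r x1 t1 \<le> R"
      using a[OF t1] r[OF t1] by auto
    show ?thesis
      using generator_lower_bound_at_min[OF levy tail v_x[OF t1] v_xx[OF t1] min1 G G2 G1_bd G_bd
          J_nonneg less_imp_le[OF \<delta>] a1 b[OF t1, of x1] r1 below] by (simp add: algebra_simps)
  qed
  moreover have "P (v x1 t1 - G x1) \<le> P 0"
    using below by (intro monoD[OF P]) simp
  ultimately have "- \<delta> * (A + B + small_jump_moment \<nu> + large_jump_moment \<nu>) \<le> Lv"
    unfolding Lv_def P0 by linarith
  moreover have "((\<lambda>s. Z x1 s) has_real_derivative Lv + \<delta> * C) (at t1 within {0..T})"
    unfolding Z_def Lv_def using v_eq[OF t1_pos] by (auto intro!: derivative_eq_intros)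
  then have "Lv + \<delta> * C \<le> 0"
    by (rule DERIV_within_min_nonpos) (use t1_pos min in auto)
  moreover have "\<delta> * (A + B + small_jump_moment \<nu> + large_jump_moment \<nu>) < \<delta> * C"
    using \<delta> C by simp
  ultimately show False by linarith
qed

theorem obstacle_le_solution:
  assumes t: "t \<in> {0..T}"
  shows "G x \<le> v x t"
proof (rule ccontr)
  assume "\<not> G x \<le> v x t"
  define C where "C = \<bar>A + B + small_jump_moment \<nu> + large_jump_moment \<nu>\<bar> + 1"
  define \<delta> where "\<delta> = (G x - v x t) / (2 * (bracket x + C * T))"
  define Z where "Z y s = v y s - G y + \<delta> * bracket y + \<delta> * C * s" for y s
  have C: "0 \<le> C" "A + B + small_jump_moment \<nu> + large_jump_moment \<nu> < C"
    by (auto simp: C_def)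
  have den: "0 < bracket x + C * T"
    using bracket_ge_1[of x] C t by (simp add: add_pos_nonneg)
  with \<open>\<not> G x \<le> v x t\<close> have \<delta>: "0 < \<delta>" by (simp add: \<delta>_def)
  have "Z x t \<le> v x t - G x + \<delta> * (bracket x + C * T)"
    using mult_left_mono[of t T "\<delta> * C"] \<delta> C t by (simp add: Z_def algebra_simps)
  also have "\<dots> = (v x t - G x) / 2"
    using den by (simp add: \<delta>_def field_simps)
  also have "\<dots> < 0" using \<open>\<not> G x \<le> v x t\<close> by simp
  finally have "Z x t < 0" .
  have G_cont: "continuous_on UNIV G"
    using G(1) by (intro continuous_at_imp_continuous_on) (auto intro: DERIV_isCont)
  obtain x1 t1 where t1: "t1 \<in> {0..T}" and min: "\<And>y s. s \<in> {0..T} \<Longrightarrow> Z x1 t1 \<le> Z y s"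
    using perturbed_difference_attains_min[OF v_cont v_bdd G_cont _ \<delta> C(1) t, of K] G_bd
    unfolding Z_def by (metis abs_of_nonneg)
  then have "0 \<le> Z x1 t1"
    unfolding Z_def by (rule perturbed_min_nonneg[OF \<delta> C]) (simp add: Z_def)
  with min[OF t, of x] \<open>Z x t < 0\<close> show False by linarith
qed

end

theorem lemma4p7:
  fixes T l lam M \<alpha> \<beta> K L J0 \<epsilon> :: real
    and a b r v :: "real \<Rightarrow> real \<Rightarrow> real"
    and g \<phi> :: "real \<Rightarrow> real"
    and g\<epsilon> p\<epsilon> :: "real \<Rightarrow> real \<Rightarrow> real"
    and \<nu> :: "real measure" and \<rho> :: "real \<Rightarrow> ennreal"
  assumes T: "T > 0"
    and l: "l > 1"
    and a_H: "par_holder T l a" and b_H: "par_holder T l b" and r_H: "par_holder T l r"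
    and r_nonneg: "\<forall>x t. t \<in> {0..T} \<longrightarrow> 0 \<le> r x t"
    and lam: "lam > 0" and a_ge: "\<forall>x t. t \<in> {0..T} \<longrightarrow> lam \<le> a x t"
    and levy: "levy_measure \<nu>"
    and nu_tail: "(\<integral>\<^sup>+ y. ennreal (\<bar>y\<bar> * indicator {y. 1 < \<bar>y\<bar>} y) \<partial>\<nu>) < \<infinity>"
    and rho_meas: "\<rho> \<in> borel_measurable borel"
    and nu_dens: "\<nu> = density lborel \<rho>"
    and M: "M > 0" and \<alpha>: "1 \<le> \<alpha>" "\<alpha> < 2"
    and rho_bd: "\<forall>y. y \<noteq> 0 \<and> \<bar>y\<bar> \<le> 1 \<longrightarrow> \<rho> y \<le> ennreal (M / \<bar>y\<bar> powr (1 + \<alpha>))"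
    and g_bd: "\<forall>x. 0 \<le> g x \<and> g x \<le> K"
    and g_lip: "\<forall>x y. \<bar>g x - g y\<bar> \<le> L * \<bar>x - y\<bar>"
    and g_conv: "dist_second_deriv_ge g (- J0)"
    and moll: "mollifier \<phi>"
    and g\<epsilon>_def: "\<forall>e x. 0 < e \<and> e < 1 \<longrightarrow>
                     g\<epsilon> e x = integral UNIV (\<lambda>y. g (x - y) * \<phi> (y / e) / e)"
    and g\<epsilon>_smooth: "\<forall>e. 0 < e \<and> e < 1 \<longrightarrow> smooth_fun (g\<epsilon> e)"
    and g\<epsilon>_conv: "\<forall>e x. 0 < e \<and> e < 1 \<longrightarrow> - J0 \<le> deriv (deriv (g\<epsilon> e)) x"
    and g\<epsilon>_bd: "\<forall>e x. 0 < e \<and> e < 1 \<longrightarrow> 0 \<le> g\<epsilon> e x \<and> g\<epsilon> e x \<le> K"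
    and g\<epsilon>_lip: "\<forall>e x. 0 < e \<and> e < 1 \<longrightarrow> \<bar>deriv (g\<epsilon> e) x\<bar> \<le> L"
    and p_smooth: "\<forall>e. 0 < e \<and> e < 1 \<longrightarrow> smooth_fun (p\<epsilon> e)"
    and p_nonpos: "\<forall>e y. 0 < e \<and> e < 1 \<longrightarrow> p\<epsilon> e y \<le> 0"
    and p_zero: "\<forall>e y. 0 < e \<and> e < 1 \<and> e \<le> y \<longrightarrow> p\<epsilon> e y = 0"
    and p_at0: "\<forall>e. 0 < e \<and> e < 1 \<longrightarrow>
        p\<epsilon> e 0 = - (Sup ((\<lambda>(x,t). a x t) ` (UNIV \<times> {0..T}))) * J0
                 - (Sup ((\<lambda>(x,t). \<bar>b x t\<bar>) ` (UNIV \<times> {0..T}))) * L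
                 - (Sup ((\<lambda>(x,t). r x t) ` (UNIV \<times> {0..T}))) * K
                 - J0 * (\<integral> y. y\<^sup>2 * indicator {-1..1} y \<partial>\<nu>)
                 - K * measure \<nu> {y. 1 < \<bar>y\<bar>}"
    and p_mono: "\<forall>e y. 0 < e \<and> e < 1 \<longrightarrow> 0 \<le> deriv (p\<epsilon> e) y"
    and p_conc: "\<forall>e y. 0 < e \<and> e < 1 \<longrightarrow> deriv (deriv (p\<epsilon> e)) y \<le> 0"
    and p_lim_pos: "\<forall>y. 0 < y \<longrightarrow> ((\<lambda>e. p\<epsilon> e y) \<longlongrightarrow> 0) (at_right 0)"
    and p_lim_neg: "\<forall>y. y < 0 \<longrightarrow> filterlim (\<lambda>e. p\<epsilon> e y) at_bot (at_right 0)"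
    and \<beta>: "\<alpha> < \<beta>" "\<beta> < 2"
    and \<epsilon>: "0 < \<epsilon>" "\<epsilon> < 1"
    and v_H: "par_holder T (2 + (\<beta> - \<alpha>) / 2) v"
    and v_bdd: "\<exists>C. \<forall>x t. t \<in> {0..T} \<longrightarrow> \<bar>v x t\<bar> \<le> C"
    and v_eq: "\<forall>x t. t \<in> {0<..T} \<longrightarrow>
        ((\<lambda>s. v x s) has_real_derivative
           (a x t * Dxx v x t + b x t * Dx v x t + levy_op \<nu> v x t - r x t * v x t
            - p\<epsilon> \<epsilon> (v x t - g\<epsilon> \<epsilon> x))) (at t within {0..T})"
    and v_init: "\<forall>x. v x 0 = g\<epsilon> \<epsilon> x"
  shows "\<forall>x t. t \<in> {0..T} \<longrightarrow> g\<epsilon> \<epsilon> x \<le> v x t"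
proof (intro allI impI)
  fix x t assume t: "t \<in> {0..T}"
  define A where "A = Sup ((\<lambda>(x, t). a x t) ` (UNIV \<times> {0..T}))"
  define B where "B = Sup ((\<lambda>(x, t). \<bar>b x t\<bar>) ` (UNIV \<times> {0..T}))"
  define R where "R = Sup ((\<lambda>(x, t). r x t) ` (UNIV \<times> {0..T}))"
  have G_smooth: "smooth_fun (g\<epsilon> \<epsilon>)" using g\<epsilon>_smooth \<epsilon> by simp
  have "\<lfloor>2 + (\<beta> - \<alpha>) / 2\<rfloor> = 2"
    using \<alpha> \<beta> by (intro floor_unique) auto
  then have v_C2: "2 \<le> nat \<lfloor>2 + (\<beta> - \<alpha>) / 2\<rfloor>" by simp
  interpret penalized_obstacle_problem \<nu> T v a b r "g\<epsilon> \<epsilon>" "deriv (g\<epsilon> \<epsilon>)" "deriv (deriv (g\<epsilon> \<epsilon>))"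
    "p\<epsilon> \<epsilon>" J0 L K A B R
  proof
    show "0 \<le> a x t \<and> a x t \<le> A" if "t \<in> {0..T}" for x t
      using le_Sup_strip[OF par_holder_bounded[OF a_H] that, of x] a_ge[rule_format, OF that, of x] lam
      unfolding A_def by linarith
    show "\<bar>b x t\<bar> \<le> B" if "t \<in> {0..T}" for x t
      using le_Sup_strip[of T "\<lambda>x t. \<bar>b x t\<bar>", OF _ that] par_holder_bounded[OF b_H]
      by (simp add: B_def)
    show "0 \<le> r x t \<and> r x t \<le> R" if "t \<in> {0..T}" for x t
      using le_Sup_strip[OF par_holder_bounded[OF r_H] that] r_nonneg that by (simp add: R_def)
    show "p\<epsilon> \<epsilon> 0 = - (A * J0 + B * L + R * K + J0 * small_jump_moment \<nu> + K * large_jump_mass \<nu>)"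
      using p_at0 \<epsilon> by (simp add: A_def B_def R_def small_jump_moment_def large_jump_mass_def)
  qed (use levy nu_tail par_holder_continuous[OF v_H] v_bdd par_holder_Dx_Dxx[OF v_H v_C2]
      smooth_fun_has_real_derivative[OF G_smooth] smooth_fun_deriv[OF G_smooth]
      smooth_fun_has_real_derivative[OF smooth_fun_deriv[OF G_smooth]] smooth_fun_mono
      g\<epsilon>_conv g\<epsilon>_lip g\<epsilon>_bd p_smooth p_mono v_eq v_init \<epsilon> in auto)
  show "g\<epsilon> \<epsilon> x \<le> v x t"
    using obstacle_le_solution[OF t] .
qed

end
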